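(* Let $\mathbf{k}$ be a field and let $p\in\mathbf{k}[y]$ satisfy: for all $\alpha,\beta,\gamma\in\mathbf{k}$, if $\deg[p(y)-\alpha p(\beta y+\gamma)]\le 1$ then $\alpha=\beta=1$ and $\gamma=0$. Let $\sigma=(y,x)$, $t=(-x+p(y),y)$ and $f=(\sigma\circ t)^2\circ\sigma\circ(t\circ\sigma)^2$ in $\mathrm{Aut}(\mathbb{A}^2_{\mathbf{k}})$. Then the subgroup $\langle B,f\rangle$ generated by $B$ and $f$ is strictly contained in $\mathrm{Aut}(\mathbb{A}^2_{\mathbf{k}})$.
   Context: $\mathrm{Aut}(\mathbb{A}^2_{\mathbf{k}})$ is the group of polynomial automorphisms $(f_1,f_2)$ of the affine plane over $\mathbf{k}$, with composition $g\circ f=(g_1(f_1,f_2),g_2(f_1,f_2))$. $B=\{(ax+q(y),\,b'y+c'): a,b'\in\mathbf{k}^*,\ c'\in\mathbf{k},\ q\in\mathbf{k}[y]\}$ is the Jonquières subgroup. *)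

theory Defs
  imports "HOL-Computational_Algebra.Polynomial"
begin

text \<open>Bivariate polynomials k[x,y] are represented as (k[y])[x], i.e. by the type
  'a poly poly: the outer variable is x, the coefficients are polynomials in y.\<close>

type_synonym 'a bipoly = "'a poly poly"

definition polX :: "'a::comm_ring_1 bipoly" where
  "polX = [:0, 1:]"

definition polY :: "'a::comm_ring_1 bipoly" where
  "polY = [:[:0, 1:]:]"

definition eval2 :: "'a::comm_ring_1 bipoly \<Rightarrow> 'a bipoly \<Rightarrow> 'a bipoly \<Rightarrow> 'a bipoly" where
  "eval2 g f1 f2 = poly (map_poly (\<lambda>c. poly (map_poly (\<lambda>a. [:[:a:]:]) c) f2) g) f1"

type_synonym 'a endo2 = "'a bipoly \<times> 'a bipoly"

definition comp2 :: "'a::comm_ring_1 endo2 \<Rightarrow> 'a endo2 \<Rightarrow> 'a endo2" where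
  "comp2 g f = (eval2 (fst g) (fst f) (snd f), eval2 (snd g) (fst f) (snd f))"

definition id2 :: "'a::comm_ring_1 endo2" where
  "id2 = (polX, polY)"

definition Aut2 :: "'a::comm_ring_1 endo2 set" where
  "Aut2 = {f. \<exists>g. comp2 g f = id2 \<and> comp2 f g = id2}"

text \<open>Jonquieres subgroup: (a x + q(y), b' y + c').\<close>
definition Jonq :: "'a::field endo2 set" where
  "Jonq = {(pCons q (pCons [:a:] 0), [:[:c', b':]:]) | a b' c' q. a \<noteq> 0 \<and> b' \<noteq> 0}"

inductive_set gen_subgroup :: "'a::comm_ring_1 endo2 set \<Rightarrow> 'a endo2 set" for S where
  gen_id: "id2 \<in> gen_subgroup S"
| gen_mult: "a \<in> gen_subgroup S \<Longrightarrow> s \<in> S \<Longrightarrow> comp2 s a \<in> gen_subgroup S"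
| gen_inv: "a \<in> gen_subgroup S \<Longrightarrow> s \<in> S \<Longrightarrow> comp2 s' s = id2 \<Longrightarrow> comp2 s s' = id2
            \<Longrightarrow> comp2 s' a \<in> gen_subgroup S"

end

(* The automorphism \<sigma> = (y, x) lies outside \<langle>B, f\<rangle>.  Since f is an involution, every element
   of \<langle>B, f\<rangle> outside B is a word b\<^sub>0 f b\<^sub>1 f \<cdots> f b\<^sub>n with b\<^sub>1, \<dots>, b\<^sub>n\<^sub>-\<^sub>1 \<noteq> id, and
   f = \<sigma> (t\<sigma>)\<^sup>4.  Each application of t\<sigma> turns a pair (w\<^sub>1, w\<^sub>2) with deg w\<^sub>2 \<le> deg w\<^sub>1 (total
   degrees) into one with deg w\<^sub>2' = deg w\<^sub>1 < deg p \<cdot> deg w\<^sub>1 = deg w\<^sub>1', and an intermediate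
   factor b\<^sub>i preserves the weak inequality unless it is affine.  If it is, it is
   absorbed by the neighbouring t\<sigma>'s, and the hypothesis on p says exactly that the resulting
   triangular map is again non-affine.  So the second component of every word has total
   degree at least 2, while that of \<sigma> is x. *)

theory Submission
  imports Defs
begin

text \<open>The polynomial \<open>q(x)\<close>, so that \<open>pcompose (liftX q) w\<close> is \<open>q(w)\<close>.\<close>
abbreviation liftX :: "'a::comm_ring_1 poly \<Rightarrow> 'a bipoly" where
  "liftX q \<equiv> map_poly (\<lambda>a. [:a:]) q"

locale comm_ring_hom =
  fixes hom :: "'a::comm_ring_1 \<Rightarrow> 'b::comm_ring_1"
  assumes hom_add: "hom (x + y) = hom x + hom y"
    and hom_mult: "hom (x * y) = hom x * hom y"
    and hom_1: "hom 1 = 1"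
begin

lemma hom_0: "hom 0 = 0"
  using hom_add[of 0 0] by simp

lemma hom_uminus: "hom (- x) = - hom x"
  using hom_add[of "- x" x] by (simp add: hom_0 eq_neg_iff_add_eq_0)

lemma hom_diff: "hom (x - y) = hom x - hom y"
  using hom_add[of x "- y"] by (simp add: hom_uminus)

lemma map_poly_pCons_hom: "map_poly hom (pCons a p) = pCons (hom a) (map_poly hom p)"
  by (simp add: map_poly_pCons hom_0)

lemma map_poly_const_hom: "map_poly hom [:a:] = [:hom a:]"
  by (simp add: map_poly_pCons_hom)

lemma map_poly_add: "map_poly hom (p + q) = map_poly hom p + map_poly hom q"
  by (intro poly_eqI) (simp add: coeff_map_poly hom_0 hom_add)

lemma map_poly_diff: "map_poly hom (p - q) = map_poly hom p - map_poly hom q"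
  by (intro poly_eqI) (simp add: coeff_map_poly hom_0 hom_diff)

lemma map_poly_smult_hom: "map_poly hom (smult a p) = smult (hom a) (map_poly hom p)"
  by (rule map_poly_smult) (simp_all add: hom_0 hom_mult)

lemma map_poly_mult: "map_poly hom (p * q) = map_poly hom p * map_poly hom q"
  by (induction p) (simp_all add: map_poly_add map_poly_smult_hom map_poly_pCons_hom hom_0)

lemma map_poly_pcompose: "map_poly hom (pcompose p q) = pcompose (map_poly hom p) (map_poly hom q)"
  by (induction p)
    (simp_all add: pcompose_pCons map_poly_add map_poly_mult map_poly_const_hom map_poly_pCons_hom)

lemma comm_ring_hom_map_poly: "comm_ring_hom (map_poly hom)"
  by unfold_locales (simp_all add: map_poly_add map_poly_mult one_pCons map_poly_const_hom hom_1)

lemma comm_ring_hom_pcompose: "comm_ring_hom (\<lambda>c. pcompose (map_poly hom c) v)"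
  by unfold_locales
    (simp_all add: map_poly_add map_poly_mult pcompose_add pcompose_mult one_pCons
       map_poly_const_hom hom_1)

definition subst2 :: "'a bipoly \<Rightarrow> 'b poly \<Rightarrow> 'b poly \<Rightarrow> 'b poly" where
  "subst2 P u v = poly (map_poly (\<lambda>c. pcompose (map_poly hom c) v) P) u"

lemma comm_ring_hom_subst2: "comm_ring_hom (\<lambda>P. subst2 P u v)"
proof -
  interpret coeff_hom: comm_ring_hom "\<lambda>c. pcompose (map_poly hom c) v"
    by (rule comm_ring_hom_pcompose)
  show ?thesis
    by unfold_locales
      (simp_all add: subst2_def coeff_hom.map_poly_add coeff_hom.map_poly_mult
        coeff_hom.comm_ring_hom_map_poly comm_ring_hom.hom_1)
qed

lemma subst2_0 [simp]: "subst2 0 u v = 0"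
  by (simp add: subst2_def)

lemma subst2_pCons: "subst2 (pCons c P) u v = pcompose (map_poly hom c) v + u * subst2 P u v"
proof -
  interpret coeff_hom: comm_ring_hom "\<lambda>c. pcompose (map_poly hom c) v"
    by (rule comm_ring_hom_pcompose)
  show ?thesis
    by (simp add: subst2_def coeff_hom.map_poly_pCons_hom)
qed

lemma subst2_const: "subst2 [:c:] u v = pcompose (map_poly hom c) v"
  by (simp add: subst2_pCons)

lemma subst2_X: "subst2 polX u v = u"
  by (simp add: polX_def subst2_pCons map_poly_const_hom hom_0 hom_1 pcompose_1)

lemma subst2_Y: "subst2 polY u v = v"
  by (simp add: polY_def subst2_const map_poly_pCons_hom hom_0 hom_1 pcompose_pCons)

lemma subst2_liftX: "subst2 (pcompose (liftX c) w) u v = pcompose (map_poly hom c) (subst2 w u v)"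
proof -
  interpret subst: comm_ring_hom "\<lambda>P. subst2 P u v"
    by (rule comm_ring_hom_subst2)
  show ?thesis
    by (induction c)
      (simp_all add: map_poly_pCons map_poly_pCons_hom pcompose_pCons subst.hom_add subst.hom_mult
         subst2_const map_poly_const_hom)
qed

end

interpretation const_poly: comm_ring_hom "\<lambda>a::'a::comm_ring_1. [:a:]"
  by unfold_locales (simp_all add: one_pCons)

lemma eval2_eq_subst2: "eval2 g f1 f2 = const_poly.subst2 g f1 f2"
  by (simp add: eval2_def const_poly.subst2_def pcompose_altdef map_poly_map_poly o_def)

lemma (in comm_ring_hom) subst2_eval2:
  "subst2 (eval2 g f1 f2) u v = subst2 g (subst2 f1 u v) (subst2 f2 u v)"
proof -
  interpret subst: comm_ring_hom "\<lambda>P. subst2 P u v"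
    by (rule comm_ring_hom_subst2)
  show ?thesis
    by (induction g)
      (simp_all add: eval2_eq_subst2 const_poly.subst2_pCons subst2_pCons subst.hom_add
         subst.hom_mult subst2_liftX)
qed

lemma eval2_assoc: "eval2 (eval2 g f1 f2) h1 h2 = eval2 g (eval2 f1 h1 h2) (eval2 f2 h1 h2)"
  using const_poly.subst2_eval2 by (simp add: eval2_eq_subst2)

lemma comp2_assoc: "comp2 (comp2 h g) f = comp2 h (comp2 g f)"
  by (simp add: comp2_def eval2_assoc)

lemma eval2_X_Y: "eval2 g polX polY = g"
proof (induction g)
  case (pCons c g)
  have "pcompose (liftX c) polY = [:c:]"
    by (simp add: polY_def pcompose_pCons_0 flip: pcompose_altdef)
  with pCons show ?case
    by (simp add: eval2_eq_subst2 const_poly.subst2_pCons polX_def)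
qed (simp add: eval2_eq_subst2)

lemma comp2_id_left [simp]: "comp2 id2 f = f"
  by (simp add: comp2_def id2_def eval2_eq_subst2 const_poly.subst2_X const_poly.subst2_Y)

lemma comp2_id_right [simp]: "comp2 f id2 = f"
  by (simp add: comp2_def id2_def eval2_X_Y)

lemma inverse_unique:
  assumes "comp2 g f = id2" and "comp2 f h = id2"
  shows "g = h"
proof -
  have "g = comp2 (comp2 g f) h"
    by (simp add: comp2_assoc assms(2))
  then show ?thesis
    by (simp add: assms(1))
qed

lemma comp2_in_Aut2:
  assumes "f \<in> Aut2" and "g \<in> Aut2"
  shows "comp2 f g \<in> Aut2"
proof -
  obtain f' g' where f': "comp2 f' f = id2" "comp2 f f' = id2"
    and g': "comp2 g' g = id2" "comp2 g g' = id2"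
    using assms unfolding Aut2_def by blast
  have "comp2 (comp2 g' f') (comp2 f g) = id2"
    by (simp add: comp2_assoc g' flip: comp2_assoc[of f' f g] add: f')
  moreover have "comp2 (comp2 f g) (comp2 g' f') = id2"
    by (simp add: comp2_assoc f' flip: comp2_assoc[of g g' f'] add: g')
  ultimately show ?thesis
    unfolding Aut2_def by blast
qed

lemma involution_in_Aut2: "comp2 f f = id2 \<Longrightarrow> f \<in> Aut2"
  unfolding Aut2_def by blast

lemma gen_subgroup_subset_Aut2:
  assumes "S \<subseteq> Aut2"
  shows "gen_subgroup S \<subseteq> Aut2"
proof
  fix g assume "g \<in> gen_subgroup S"
  then show "g \<in> Aut2"
  proof induction
    case gen_id
    show ?case by (rule involution_in_Aut2) simp
  next
    case (gen_mult a s)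
    with assms show ?case by (blast intro: comp2_in_Aut2)
  next
    case (gen_inv a s s')
    then have "s' \<in> Aut2" unfolding Aut2_def by blast
    with gen_inv show ?case by (blast intro: comp2_in_Aut2)
  qed
qed

definition jonq :: "'a::field \<Rightarrow> 'a poly \<Rightarrow> 'a \<Rightarrow> 'a \<Rightarrow> 'a endo2" where
  "jonq a q b c = (pCons q (pCons [:a:] 0), [:[:c, b:]:])"

lemma Jonq_iff: "g \<in> Jonq \<longleftrightarrow> (\<exists>a q b c. a \<noteq> 0 \<and> b \<noteq> 0 \<and> g = jonq a q b c)"
  unfolding Jonq_def jonq_def by blast

lemma comp2_jonq:
  "comp2 (jonq a q b c) w =
     (smult [:a:] (fst w) + pcompose (liftX q) (snd w), [:[:c:]:] + smult [:b:] (snd w))"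
  by (simp add: comp2_def jonq_def eval2_eq_subst2 const_poly.subst2_pCons
      const_poly.subst2_const const_poly.map_poly_pCons_hom const_poly.map_poly_const_hom
      pcompose_pCons algebra_simps)

lemma jonq_comp_jonq:
  "comp2 (jonq a q b c) (jonq a' q' b' c') =
     jonq (a * a') (smult a q' + pcompose q [:c', b':]) (b * b') (c + b * c')"
  unfolding comp2_jonq by (simp add: jonq_def pcompose_pCons_0 flip: pcompose_altdef)

lemma jonq_id: "jonq 1 0 1 0 = id2"
  by (simp add: jonq_def id2_def polX_def polY_def)

lemma comp2_jonq_inverse:
  fixes a b c :: "'a::field" and q :: "'a poly"
  assumes "a \<noteq> 0" "b \<noteq> 0"
  defines "g' \<equiv> jonq (1 / a) (- smult (1 / a) (pcompose q [:- c / b, 1 / b:])) (1 / b) (- c / b)"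
  shows "comp2 g' (jonq a q b c) = id2" and "comp2 (jonq a q b c) g' = id2"
proof -
  have "pcompose [:- c / b, 1 / b:] [:c, b:] = [:0, 1:]"
    and "pcompose [:c, b:] [:- c / b, 1 / b:] = [:0, 1:]"
    using assms by (simp_all add: pcompose_pCons field_simps)
  then show "comp2 g' (jonq a q b c) = id2" and "comp2 (jonq a q b c) g' = id2"
    using assms unfolding g'_def jonq_comp_jonq
    by (simp_all add: pcompose_uminus pcompose_smult flip: pcompose_assoc jonq_id)
qed

lemma id2_in_Jonq: "id2 \<in> Jonq"
  unfolding Jonq_iff by (metis jonq_id one_neq_zero)

lemma comp2_in_Jonq:
  assumes "f \<in> Jonq" and "g \<in> Jonq"
  shows "comp2 f g \<in> Jonq"
proof -
  obtain a q b c where "a \<noteq> 0" "b \<noteq> 0" "f = jonq a q b c"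
    using assms(1) unfolding Jonq_iff by blast
  moreover obtain a' q' b' c' where "a' \<noteq> 0" "b' \<noteq> 0" "g = jonq a' q' b' c'"
    using assms(2) unfolding Jonq_iff by blast
  ultimately show ?thesis
    unfolding Jonq_iff by (metis jonq_comp_jonq mult_eq_0_iff)
qed

lemma Jonq_inverse:
  assumes "g \<in> Jonq"
  shows "\<exists>g'\<in>Jonq. comp2 g' g = id2 \<and> comp2 g g' = id2"
proof -
  obtain a q b c where abc: "a \<noteq> 0" "b \<noteq> 0" "g = jonq a q b c"
    using assms unfolding Jonq_iff by blast
  have "1 / a \<noteq> 0" "1 / b \<noteq> 0"
    using abc by simp_all
  then have "jonq (1 / a) (- smult (1 / a) (pcompose q [:- c / b, 1 / b:])) (1 / b) (- c / b) \<in> Jonq"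
    unfolding Jonq_iff by blast
  with comp2_jonq_inverse[OF abc(1,2)] show ?thesis
    unfolding abc(3) by blast
qed

lemma Jonq_subset_Aut2: "Jonq \<subseteq> Aut2"
  unfolding Aut2_def using Jonq_inverse by blast

definition swap2 :: "'a::comm_ring_1 endo2" where
  "swap2 = (polY, polX)"

lemma comp2_swap2: "comp2 swap2 w = (snd w, fst w)"
  by (simp add: comp2_def swap2_def eval2_eq_subst2 const_poly.subst2_X const_poly.subst2_Y)

lemma swap2_involution: "comp2 swap2 swap2 = id2"
  unfolding comp2_swap2 by (simp add: swap2_def id2_def)

lemma swap2_notin_Jonq: "swap2 \<notin> Jonq"
  by (auto simp: Jonq_iff swap2_def jonq_def polX_def)

inductive_set reduced_words :: "'a::field endo2 \<Rightarrow> 'a endo2 set" for f where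
  reduced_words_base: "b \<in> Jonq \<Longrightarrow> comp2 f b \<in> reduced_words f"
| reduced_words_step: "b \<in> Jonq \<Longrightarrow> b \<noteq> id2 \<Longrightarrow> r \<in> reduced_words f
    \<Longrightarrow> comp2 f (comp2 b r) \<in> reduced_words f"

definition normal_forms :: "'a::field endo2 \<Rightarrow> 'a endo2 set" where
  "normal_forms f = Jonq \<union> {comp2 b r | b r. b \<in> Jonq \<and> r \<in> reduced_words f}"

lemma reduced_words_in_normal_forms:
  assumes "r \<in> reduced_words f"
  shows "r \<in> normal_forms f"
proof -
  have "r = comp2 id2 r"
    by simp
  with assms show ?thesis
    unfolding normal_forms_def using id2_in_Jonq by blast
qed

lemma involution_comp_reduced_word:
  assumes "comp2 f f = id2" and "r \<in> reduced_words f"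
  shows "comp2 f r \<in> normal_forms f"
  using assms(2)
proof cases
  case (reduced_words_base b)
  then have "comp2 f r = b"
    by (simp add: assms(1) flip: comp2_assoc)
  with reduced_words_base show ?thesis
    by (simp add: normal_forms_def)
next
  case (reduced_words_step b r')
  then have "comp2 f r = comp2 b r'"
    by (simp add: assms(1) flip: comp2_assoc)
  with reduced_words_step show ?thesis
    unfolding normal_forms_def by blast
qed

lemma normal_forms_comp_closed:
  assumes "comp2 f f = id2" and "s \<in> Jonq \<union> {f}" and "g \<in> normal_forms f"
  shows "comp2 s g \<in> normal_forms f"
proof -
  consider "g \<in> Jonq" | b r where "g = comp2 b r" "b \<in> Jonq" "r \<in> reduced_words f"
    using assms(3) unfolding normal_forms_def by blast
  then show ?thesis
  proof cases
    case 1
    with assms(2) show ?thesis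
      using comp2_in_Jonq reduced_words_base reduced_words_in_normal_forms
      unfolding normal_forms_def by blast
  next
    case 2
    show ?thesis
    proof (cases "s \<in> Jonq")
      case True
      have "comp2 s g = comp2 (comp2 s b) r"
        by (simp add: 2 comp2_assoc)
      with 2 True show ?thesis
        unfolding normal_forms_def using comp2_in_Jonq by blast
    next
      case False
      with assms(2) have "s = f"
        by blast
      show ?thesis
      proof (cases "b = id2")
        case True
        with 2 \<open>s = f\<close> assms(1) show ?thesis
          using involution_comp_reduced_word by simp
      next
        case False
        with 2 \<open>s = f\<close> show ?thesis
          using reduced_words_step reduced_words_in_normal_forms by blast
      qed
    qed
  qed
qed

lemma gen_subgroup_subset_normal_forms:
  assumes "comp2 f f = id2"
  shows "gen_subgroup (Jonq \<union> {f}) \<subseteq> normal_forms f"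
proof
  fix g assume "g \<in> gen_subgroup (Jonq \<union> {f})"
  then show "g \<in> normal_forms f"
  proof induction
    case gen_id
    show ?case
      unfolding normal_forms_def using id2_in_Jonq by blast
  next
    case (gen_mult a s)
    then show ?case
      using normal_forms_comp_closed assms by blast
  next
    case (gen_inv a s s')
    have "s' \<in> Jonq \<union> {f}"
    proof (cases "s \<in> Jonq")
      case True
      then obtain s'' where "s'' \<in> Jonq" "comp2 s s'' = id2"
        using Jonq_inverse by blast
      with gen_inv.hyps(3) show ?thesis
        using inverse_unique by blast
    next
      case False
      with gen_inv.hyps(2) have "s = f"
        by blast
      with gen_inv.hyps(3) assms show ?thesis
        using inverse_unique by blast
    qed
    with gen_inv.IH show ?case
      using normal_forms_comp_closed assms by blast
  qed
qed

interpretation const_bipoly: comm_ring_hom "\<lambda>a::'a::comm_ring_1. [:[:a:]:]"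
  by unfold_locales (simp_all add: one_pCons)

text \<open>\<open>P(t x, t y)\<close> as a polynomial in \<open>t\<close>; its degree is the total degree of \<open>P\<close>.\<close>
definition homogenize :: "'a::comm_ring_1 bipoly \<Rightarrow> 'a bipoly poly" where
  "homogenize P = const_bipoly.subst2 P [:0, polX:] [:0, polY:]"

definition total_degree :: "'a::comm_ring_1 bipoly \<Rightarrow> nat" where
  "total_degree P = degree (homogenize P)"

lemma homogenize_add: "homogenize (P + Q) = homogenize P + homogenize Q"
  by (simp add: homogenize_def comm_ring_hom.hom_add[OF const_bipoly.comm_ring_hom_subst2])

lemma homogenize_smult: "homogenize (smult [:a:] P) = smult [:[:a:]:] (homogenize P)"
proof -
  interpret subst: comm_ring_hom "\<lambda>P. const_bipoly.subst2 P [:0, polX:] [:0, polY:]"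
    by (rule const_bipoly.comm_ring_hom_subst2)
  have "homogenize ([:[:a:]:] * P) = [:[:[:a:]:]:] * homogenize P"
    unfolding homogenize_def subst.hom_mult
    by (simp add: const_bipoly.subst2_const const_bipoly.map_poly_const_hom)
  then show ?thesis
    by simp
qed

lemma homogenize_const_const: "homogenize [:[:c:]:] = [:[:[:c:]:]:]"
  by (simp add: homogenize_def const_bipoly.subst2_const const_bipoly.map_poly_const_hom)

lemma homogenize_pcompose_liftX:
  "homogenize (pcompose (liftX q) w) = pcompose (map_poly (\<lambda>a. [:[:a:]:]) q) (homogenize w)"
  by (simp add: homogenize_def const_bipoly.subst2_liftX)

lemma total_degree_X: "total_degree polX = 1"
  unfolding total_degree_def homogenize_def const_bipoly.subst2_X by (simp add: polX_def)

lemma degree_pcompose_const_bipoly: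
  "degree (pcompose (map_poly (\<lambda>a. [:[:a:]:]) q) (W :: 'a::idom bipoly poly)) = degree q * degree W"
proof (cases "q = 0")
  case False
  then have "degree (map_poly (\<lambda>a. [:[:a:]:]) q) = degree q"
    by (intro map_poly_degree_eq) simp
  then show ?thesis
    by (simp add: degree_pcompose)
qed simp

lemma total_degree_affine:
  fixes w :: "'a::idom bipoly"
  assumes "b \<noteq> 0" and "1 \<le> total_degree w"
  shows "total_degree ([:[:c:]:] + smult [:b:] w) = total_degree w"
  using assms
  by (simp add: total_degree_def homogenize_add homogenize_smult homogenize_const_const
      degree_add_eq_right)

lemma total_degree_add_pcompose_liftX:
  fixes v w :: "'a::idom bipoly"
  assumes "total_degree v < degree q * total_degree w"
  shows "total_degree (smult [:a:] v + pcompose (liftX q) w) = degree q * total_degree w"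
proof -
  have "degree (smult [:[:a:]:] (homogenize v)) < degree q * total_degree w"
    using assms degree_smult_le[of "[:[:a:]:]" "homogenize v"] by (simp add: total_degree_def)
  then show ?thesis
    by (simp add: total_degree_def homogenize_add homogenize_smult homogenize_pcompose_liftX
        degree_pcompose_const_bipoly degree_add_eq_right)
qed

definition jonq_swap :: "'a::field \<Rightarrow> 'a poly \<Rightarrow> 'a \<Rightarrow> 'a \<Rightarrow> 'a endo2 \<Rightarrow> 'a endo2" where
  "jonq_swap a q b c w = comp2 (jonq a q b c) (comp2 swap2 w)"

lemma jonq_swap_eq:
  "jonq_swap a q b c w =
     (smult [:a:] (snd w) + pcompose (liftX q) (fst w), [:[:c:]:] + smult [:b:] (fst w))"
  by (simp add: jonq_swap_def comp2_jonq comp2_swap2)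

definition dominant :: "'a::field endo2 \<Rightarrow> bool" where
  "dominant w \<longleftrightarrow> 1 \<le> total_degree (snd w) \<and> total_degree (snd w) < total_degree (fst w)"

definition weakly_dominant :: "'a::field endo2 \<Rightarrow> bool" where
  "weakly_dominant w \<longleftrightarrow> 1 \<le> total_degree (snd w) \<and> total_degree (snd w) \<le> total_degree (fst w)"

lemma dominant_imp_weakly_dominant: "dominant w \<Longrightarrow> weakly_dominant w"
  unfolding dominant_def weakly_dominant_def by simp

lemma weakly_dominant_jonq:
  assumes "a \<noteq> 0" and "b \<noteq> 0"
  shows "weakly_dominant (jonq a q b c)"
proof -
  have "total_degree (snd (jonq a q b c)) = 1"
    using assms(2)
    by (simp add: jonq_def total_degree_def homogenize_def const_bipoly.subst2_const
        degree_pcompose_const_bipoly polY_def)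
  moreover have "coeff (homogenize (fst (jonq a q b c))) 1 = [:[:0, coeff q 1:], [:a:]:]"
    by (simp add: jonq_def homogenize_def const_bipoly.subst2_pCons const_bipoly.subst2_const
        coeff_pcompose_linear coeff_map_poly polX_def polY_def const_bipoly.map_poly_const_hom)
  then have "1 \<le> total_degree (fst (jonq a q b c))"
    unfolding total_degree_def using assms(1) by (intro le_degree) simp
  ultimately show ?thesis
    unfolding weakly_dominant_def by simp
qed

lemma dominant_jonq_swap:
  assumes "b \<noteq> 0" and "2 \<le> degree q" and "weakly_dominant w"
  shows "dominant (jonq_swap a q b c w)"
proof -
  have w: "1 \<le> total_degree (snd w)" "total_degree (snd w) \<le> total_degree (fst w)"
    using assms(3) unfolding weakly_dominant_def by simp_all
  have grow: "total_degree (fst w) < degree q * total_degree (fst w)"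
    using w assms(2) by simp
  then have "total_degree (snd w) < degree q * total_degree (fst w)"
    using w by linarith
  then have "total_degree (fst (jonq_swap a q b c w)) = degree q * total_degree (fst w)"
    by (simp add: jonq_swap_eq total_degree_add_pcompose_liftX)
  with grow w assms(1) show ?thesis
    by (simp add: dominant_def jonq_swap_eq total_degree_affine)
qed

lemma weakly_dominant_jonq_swap:
  assumes "b \<noteq> 0" and "1 \<le> degree q" and "dominant w"
  shows "weakly_dominant (jonq_swap a q b c w)"
proof -
  have w: "1 \<le> total_degree (snd w)" "total_degree (snd w) < total_degree (fst w)"
    using assms(3) unfolding dominant_def by simp_all
  have grow: "total_degree (fst w) \<le> degree q * total_degree (fst w)"
    using assms(2) by simp
  then have "total_degree (snd w) < degree q * total_degree (fst w)"
    using w by linarith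
  then have "total_degree (fst (jonq_swap a q b c w)) = degree q * total_degree (fst w)"
    by (simp add: jonq_swap_eq total_degree_add_pcompose_liftX)
  with grow w assms(1) show ?thesis
    by (simp add: weakly_dominant_def jonq_swap_eq total_degree_affine)
qed

definition reflection :: "'a::field poly \<Rightarrow> 'a endo2" where
  "reflection p = jonq (- 1) p 1 0"

abbreviation reflect_swap :: "'a::field poly \<Rightarrow> 'a endo2 \<Rightarrow> 'a endo2" where
  "reflect_swap p w \<equiv> jonq_swap (- 1) p 1 0 w"

lemma reflect_swap_affine_reflect_swap:
  "reflect_swap p (jonq_swap a [:h:] b c (reflect_swap p w)) =
     jonq_swap b (pcompose p [:h, a:] - smult b p - [:c:]) a h w"
proof -
  have "smult [:- x:] v = - smult [:x:] v" and "smult [:1:] v = v" for x and v :: "'a bipoly"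
    by (simp_all flip: one_pCons smult_minus_left)
  then show ?thesis
    by (simp add: jonq_swap_eq const_poly.map_poly_diff const_poly.map_poly_add const_poly.map_poly_smult_hom
        const_poly.map_poly_pcompose const_poly.map_poly_pCons_hom const_poly.map_poly_const_hom
        pcompose_add pcompose_diff pcompose_smult pcompose_pCons smult_diff_right algebra_simps
        flip: pcompose_assoc)
qed

definition affinely_rigid :: "'a::field poly \<Rightarrow> bool" where
  "affinely_rigid p \<longleftrightarrow>
     (\<forall>\<alpha> \<beta> \<gamma>. degree (p - smult \<alpha> (p \<circ>\<^sub>p [:\<gamma>, \<beta>:])) \<le> 1 \<longrightarrow> \<alpha> = 1 \<and> \<beta> = 1 \<and> \<gamma> = 0)"

lemma affinely_rigid_degree:
  assumes "affinely_rigid p"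
  shows "2 \<le> degree p"
proof (rule ccontr)
  assume "\<not> 2 \<le> degree p"
  then have "degree (p - smult 0 (p \<circ>\<^sub>p [:0, 0:])) \<le> 1"
    by simp
  with assms have "(0::'a) = 1"
    unfolding affinely_rigid_def by blast
  then show False
    by simp
qed

lemma affinely_rigid_affine:
  assumes "affinely_rigid p" and "b \<noteq> 0" and "degree (p \<circ>\<^sub>p [:h, a:] - smult b p) \<le> 1"
  shows "a = 1 \<and> b = 1 \<and> h = 0"
proof -
  have "p - smult (1 / b) (p \<circ>\<^sub>p [:h, a:]) = smult (- 1 / b) (p \<circ>\<^sub>p [:h, a:] - smult b p)"
    using assms(2) by (simp add: smult_diff_right)
  then have "degree (p - smult (1 / b) (p \<circ>\<^sub>p [:h, a:])) \<le> 1"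
    using assms(3) degree_smult_le[of "- 1 / b" "p \<circ>\<^sub>p [:h, a:] - smult b p"] by simp
  with assms(1) have "1 / b = 1 \<and> a = 1 \<and> h = 0"
    unfolding affinely_rigid_def by blast
  then show ?thesis
    by simp
qed

lemma affinely_rigid_translate:
  assumes "affinely_rigid p" and "c \<noteq> 0"
  shows "2 \<le> degree (p \<circ>\<^sub>p [:- c, 1:] - p)"
proof (rule ccontr)
  assume "\<not> ?thesis"
  moreover have "p - smult 1 (p \<circ>\<^sub>p [:- c, 1:]) = - (p \<circ>\<^sub>p [:- c, 1:] - p)"
    by simp
  ultimately have "degree (p - smult 1 (p \<circ>\<^sub>p [:- c, 1:])) \<le> 1"
    by (simp only: degree_minus)
  with assms(1) have "- c = 0"
    unfolding affinely_rigid_def by blast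
  with assms(2) show False
    by simp
qed

lemma dominant_reflect_swap:
  assumes "affinely_rigid p" and "weakly_dominant w"
  shows "dominant (reflect_swap p w)"
  using assms by (intro dominant_jonq_swap affinely_rigid_degree) simp_all

lemma dominant_reflect_swap_affine:
  assumes rigid: "affinely_rigid p" and s: "dominant s"
    and "a \<noteq> 0" and "b \<noteq> 0" and nontrivial: "jonq a [:h:] b c \<noteq> id2"
  shows "dominant (reflect_swap p (reflect_swap p (jonq_swap a [:h:] b c
           (reflect_swap p (reflect_swap p s)))))"
proof -
  define r where "r = p \<circ>\<^sub>p [:h, a:] - smult b p - [:c:]"
  have Ts: "dominant (reflect_swap p s)"
    using s rigid by (simp add: dominant_imp_weakly_dominant dominant_reflect_swap)
  txt \<open>The affine factor is absorbed by its neighbours; rigidity of \<open>p\<close> makes the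
    resulting \<open>r\<close> non-constant unless the factor is a translation in \<open>y\<close>, which is absorbed once
    more, leaving \<open>p(y - c) - p(y)\<close>.\<close>
  have conj: "reflect_swap p (jonq_swap a [:h:] b c (reflect_swap p (reflect_swap p s))) =
      jonq_swap b r a h (reflect_swap p s)"
    unfolding r_def by (rule reflect_swap_affine_reflect_swap)
  show ?thesis
  proof (cases "1 \<le> degree r")
    case True
    have "weakly_dominant (jonq_swap b r a h (reflect_swap p s))"
      using \<open>a \<noteq> 0\<close> True Ts by (rule weakly_dominant_jonq_swap)
    with rigid show ?thesis
      unfolding conj by (rule dominant_reflect_swap)
  next
    case False
    then have "degree (r + [:c:]) \<le> 0"
      by (intro degree_add_le) simp_all
    then have "degree (p \<circ>\<^sub>p [:h, a:] - smult b p) \<le> 1"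
      by (simp add: r_def)
    then have abh: "a = 1" "b = 1" "h = 0"
      using affinely_rigid_affine[OF rigid \<open>b \<noteq> 0\<close>] by simp_all
    with nontrivial have "c \<noteq> 0"
      using jonq_id by auto
    have "reflect_swap p (jonq_swap b r a h (reflect_swap p s)) =
        jonq_swap 1 (p \<circ>\<^sub>p [:- c, 1:] - smult 1 p - [:0:]) 1 (- c) s"
      using reflect_swap_affine_reflect_swap[of p 1 "- c" 1 0 s] by (simp add: r_def abh)
    moreover have "dominant (jonq_swap 1 (p \<circ>\<^sub>p [:- c, 1:] - smult 1 p - [:0:]) 1 (- c) s)"
      using affinely_rigid_translate[OF rigid \<open>c \<noteq> 0\<close>] s
      by (intro dominant_jonq_swap dominant_imp_weakly_dominant) simp_all
    ultimately show ?thesis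
      unfolding conj by simp
  qed
qed

lemma dominant_reflect_swap_jonq:
  assumes rigid: "affinely_rigid p" and s: "dominant s"
    and "a \<noteq> 0" and "b \<noteq> 0" and "jonq a q b c \<noteq> id2"
  shows "dominant (reflect_swap p (reflect_swap p (jonq_swap a q b c
           (reflect_swap p (reflect_swap p s)))))"
proof (cases "degree q = 0")
  case True
  then obtain h where "q = [:h:]"
    using degree0_coeffs by blast
  with assms show ?thesis
    using dominant_reflect_swap_affine by blast
next
  case False
  have "dominant (reflect_swap p (reflect_swap p s))"
    using s rigid by (simp add: dominant_imp_weakly_dominant dominant_reflect_swap)
  with False \<open>b \<noteq> 0\<close> rigid show ?thesis
    by (simp add: dominant_imp_weakly_dominant dominant_reflect_swap weakly_dominant_jonq_swap)
qed

lemma reflection_involution: "comp2 (reflection p) (reflection p) = id2"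
  by (simp add: reflection_def jonq_comp_jonq flip: jonq_id)

lemma reflection_comp2_swap2: "comp2 (reflection p) (comp2 swap2 w) = reflect_swap p w"
  by (simp add: reflection_def jonq_swap_def)

definition palindrome :: "'a::field poly \<Rightarrow> 'a endo2" where
  "palindrome p =
     comp2 (comp2 (comp2 swap2 (reflection p)) (comp2 swap2 (reflection p)))
       (comp2 swap2 (comp2 (comp2 (reflection p) swap2) (comp2 (reflection p) swap2)))"

lemma palindrome_eq:
  "palindrome p = comp2 swap2 (comp2 (reflection p) (comp2 swap2 (comp2 (reflection p)
     (comp2 swap2 (comp2 (reflection p) (comp2 swap2 (comp2 (reflection p) swap2)))))))"
  by (simp only: palindrome_def comp2_assoc)

lemma comp2_palindrome:
  "comp2 (palindrome p) g =
     comp2 swap2 (reflect_swap p (reflect_swap p (reflect_swap p (reflect_swap p g))))"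
  unfolding palindrome_eq by (simp only: comp2_assoc) (simp only: reflection_comp2_swap2)

lemma palindrome_involution: "comp2 (palindrome p) (palindrome p) = id2"
proof -
  have swap: "comp2 swap2 (comp2 swap2 g) = g" and refl: "comp2 (reflection p) (comp2 (reflection p) g) = g"
    for g :: "'a endo2"
    by (simp_all add: swap2_involution reflection_involution flip: comp2_assoc)
  show ?thesis
    by (simp only: palindrome_eq comp2_assoc swap refl swap2_involution reflection_involution)
qed

lemma reduced_word_shape:
  assumes rigid: "affinely_rigid p" and "r \<in> reduced_words (palindrome p)"
  shows "\<exists>s. dominant s \<and> r = comp2 swap2 (reflect_swap p (reflect_swap p s))"
  using assms(2)
proof induction
  case (reduced_words_base b)
  then obtain a q b' c where "a \<noteq> 0" "b' \<noteq> 0" "b = jonq a q b' c"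
    unfolding Jonq_iff by blast
  then have "dominant (reflect_swap p (reflect_swap p b))"
    using rigid by (simp add: weakly_dominant_jonq dominant_imp_weakly_dominant dominant_reflect_swap)
  then show ?case
    using comp2_palindrome by blast
next
  case (reduced_words_step b r)
  then obtain a q b' c where abc: "a \<noteq> 0" "b' \<noteq> 0" "b = jonq a q b' c"
    unfolding Jonq_iff by blast
  from reduced_words_step.IH obtain s
    where s: "dominant s" "r = comp2 swap2 (reflect_swap p (reflect_swap p s))"
    by blast
  have "comp2 b r = jonq_swap a q b' c (reflect_swap p (reflect_swap p s))"
    by (simp add: abc(3) s(2) jonq_swap_def)
  moreover have "dominant (reflect_swap p (reflect_swap p (jonq_swap a q b' c
      (reflect_swap p (reflect_swap p s)))))"
    using dominant_reflect_swap_jonq[OF rigid s(1) abc(1,2)] reduced_words_step.hyps(2) abc(3)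
    by blast
  ultimately show ?case
    using comp2_palindrome by metis
qed

lemma swap2_notin_normal_forms:
  assumes rigid: "affinely_rigid p"
  shows "swap2 \<notin> normal_forms (palindrome p)"
proof
  assume "swap2 \<in> normal_forms (palindrome p)"
  with swap2_notin_Jonq obtain b r
    where "swap2 = comp2 b r" "b \<in> Jonq" "r \<in> reduced_words (palindrome p)"
    unfolding normal_forms_def by blast
  moreover obtain a q b' c where "b' \<noteq> 0" "b = jonq a q b' c"
    using \<open>b \<in> Jonq\<close> unfolding Jonq_iff by blast
  moreover obtain s where s: "dominant s" "r = comp2 swap2 (reflect_swap p (reflect_swap p s))"
    using reduced_word_shape[OF rigid \<open>r \<in> reduced_words _\<close>] by blast
  ultimately have swap: "swap2 = jonq_swap a q b' c (reflect_swap p (reflect_swap p s))"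
    by (simp add: jonq_swap_def)
  have w: "dominant (reflect_swap p (reflect_swap p s))"
    using s(1) rigid by (simp add: dominant_imp_weakly_dominant dominant_reflect_swap)
  then have "total_degree (snd (swap2 :: 'a endo2)) = total_degree (fst (reflect_swap p (reflect_swap p s)))"
    unfolding swap using \<open>b' \<noteq> 0\<close> by (simp add: jonq_swap_eq dominant_def total_degree_affine)
  moreover have "total_degree (snd (swap2 :: 'a endo2)) = 1"
    by (simp add: swap2_def total_degree_X)
  ultimately show False
    using w unfolding dominant_def by simp
qed

theorem proposition4p4:
  fixes p :: "'a::field poly"
  assumes hp: "\<forall>\<alpha> \<beta> \<gamma>. degree (p - smult \<alpha> (p \<circ>\<^sub>p [:\<gamma>, \<beta>:])) \<le> 1
                 \<longrightarrow> \<alpha> = 1 \<and> \<beta> = 1 \<and> \<gamma> = 0"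
  defines "\<sigma> \<equiv> (polY, polX)"
      and "t \<equiv> (- polX + [:p:], polY)"
  defines "f \<equiv> comp2 (comp2 (comp2 \<sigma> t) (comp2 \<sigma> t))
                 (comp2 \<sigma> (comp2 (comp2 t \<sigma>) (comp2 t \<sigma>)))"
  shows "gen_subgroup (Jonq \<union> {f}) \<subset> Aut2"
proof -
  have rigid: "affinely_rigid p"
    using hp unfolding affinely_rigid_def .
  have "t = reflection p"
    by (simp add: t_def reflection_def jonq_def polX_def polY_def one_pCons)
  then have f: "f = palindrome p"
    by (simp add: f_def \<sigma>_def palindrome_def swap2_def)
  have "Jonq \<union> {f} \<subseteq> Aut2"
    unfolding f using Jonq_subset_Aut2 involution_in_Aut2[OF palindrome_involution] by blast
  then have "gen_subgroup (Jonq \<union> {f}) \<subseteq> Aut2"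
    by (rule gen_subgroup_subset_Aut2)
  moreover have "swap2 \<notin> gen_subgroup (Jonq \<union> {f})"
    using gen_subgroup_subset_normal_forms[OF palindrome_involution] swap2_notin_normal_forms[OF rigid]
    unfolding f by blast
  moreover have "swap2 \<in> Aut2"
    using swap2_involution by (rule involution_in_Aut2)
  ultimately show ?thesis
    by blast
qed

end
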